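(* Let $P\in\mathbb{R}[x]$ have degree $n\ge 2$, and let $r_1,\dots,r_m\in\mathbb{C}$ be its distinct complex roots with multiplicities $\mu_1\ge\mu_2\ge\cdots\ge\mu_m\ge1$, so that $\operatorname{mult}(P)=\boldsymbol\mu=(\mu_1,\dots,\mu_m)$. Let $\bar{\boldsymbol\mu}=(\bar\mu_1,\dots,\bar\mu_n)$ be the conjugate of $\boldsymbol\mu$, i.e. $\bar\mu_i=\#\{j\in\{1,\dots,m\}:\mu_j\ge i\}$. For $1\le i\le n$ let $G_i=\gcd(P^{(0)},P^{(1)},\dots,P^{(i)})$, where $P^{(k)}$ denotes the $k$-th derivative of $P$ with respect to $x$. Then for every $1\le i\le n$, $$R_{(\bar\mu_1,\dots,\bar\mu_i)}\big(P^{(0)},P^{(1)},\dots,P^{(i)}\big)=c_i\prod_{k:\ \mu_k>i}(x-r_k)^{\mu_k-i}$$ for some nonzero constant $c_i$; in particular $R_{(\bar\mu_1,\dots,\bar\mu_i)}(P^{(0)},\dots,P^{(i)})$ equals $G_i$ up to a nonzero constant factor. (In other words, the incremental gcd $(G_1,\dots,G_n)$ of $(P^{(0)},\dots,P^{(n)})$ is, up to nonzero constant factors, $\big(R_{(\bar\mu_1)},R_{(\bar\mu_1,\bar\mu_2)},\dots,R_{(\bar\mu_1,\dots,\bar\mu_n)}\big)$.)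
   Context: Subresultants of several polynomials. Let $\boldsymbol F=(F_0,F_1,\dots,F_t)$ be polynomials in $x$ with $d_i=\deg F_i$ and $F_i=\sum_{j=0}^{d_i}a_{ij}x^j$, $a_{0d_0}\neq0$. For $\boldsymbol\delta=(\delta_1,\dots,\delta_t)\in\mathbb{Z}_{\ge0}^t$ with $|\boldsymbol\delta|:=\delta_1+\cdots+\delta_t\le d_0$, put $\delta_0=\max_{1\le i\le t,\ \delta_i\neq0}(d_i+\delta_i)-d_0$ if this maximum is $\ge d_0$, and $\delta_0=1$ otherwise. The generalized Sylvester matrix $\boldsymbol M_{\boldsymbol\delta}(\boldsymbol F)$ is the $(\delta_0+|\boldsymbol\delta|)\times(\delta_0+d_0)$ matrix whose rows are, in this order, the coefficient vectors of $x^{\delta_0-1}F_0,\dots,x^0F_0,\ x^{\delta_1-1}F_1,\dots,x^0F_1,\ \dots,\ x^{\delta_t-1}F_t,\dots,x^0F_t$ with respect to the monomials $x^{\delta_0+d_0-1},\dots,x,1$ (a polynomial $F_i$ with $\delta_i=0$ contributes no rows). For a $p\times q$ matrix $\boldsymbol M$ with $p\le q$ and columns $\boldsymbol M_1,\dots,\boldsymbol M_q$, its determinant polynomial is $\operatorname{dp}\boldsymbol M=\sum_{i=0}^{q-p}\det[\boldsymbol M_1,\dots,\boldsymbol M_{p-1},\boldsymbol M_{q-i}]\,x^i$. The $\boldsymbol\delta$-th subresultant is $R_{\boldsymbol\delta}(\boldsymbol F)=\operatorname{dp}\boldsymbol M_{\boldsymbol\delta}(\boldsymbol F)$. *)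

theory Defs
  imports "Jordan_Normal_Form.Determinant" "HOL-Computational_Algebra.Polynomial"
    "HOL-Computational_Algebra.Polynomial_Factorial" "HOL-Computational_Algebra.Field_as_Ring"
begin

text \<open>Polynomials F = [F_0, ..., F_t] are given as a list, and
  delta = [delta_1, ..., delta_t] as a list of length t.\<close>

definition sres_delta0 :: "'a::zero poly list \<Rightarrow> nat list \<Rightarrow> nat" where
  "sres_delta0 F \<delta> =
     (let d0 = degree (F ! 0);
          S = {degree (F ! i) + \<delta> ! (i - 1) | i. 1 \<le> i \<and> i < length F \<and> \<delta> ! (i - 1) \<noteq> 0}
      in if S \<noteq> {} \<and> Max S \<ge> d0 then Max S - d0 else 1)"

definition sres_row_polys :: "'a::comm_semiring_1 poly list \<Rightarrow> nat list \<Rightarrow> 'a poly list" where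
  "sres_row_polys F \<delta> =
     concat (map (\<lambda>(Fj, dj). map (\<lambda>k. monom 1 k * Fj) (rev [0..<dj]))
                 (zip F (sres_delta0 F \<delta> # \<delta>)))"

definition gen_sylvester_mat :: "'a::comm_semiring_1 poly list \<Rightarrow> nat list \<Rightarrow> 'a mat" where
  "gen_sylvester_mat F \<delta> =
     (let rows = sres_row_polys F \<delta>; q = sres_delta0 F \<delta> + degree (F ! 0)
      in mat (length rows) q (\<lambda>(r, c). coeff (rows ! r) (q - 1 - c)))"

definition det_poly :: "'a::comm_ring_1 mat \<Rightarrow> 'a poly" where
  "det_poly M =
     (let p = dim_row M; q = dim_col M
      in (\<Sum>i = 0..q - p. monom (det (mat p p (\<lambda>(r, c).
             if c < p - 1 then M $$ (r, c) else M $$ (r, q - 1 - i)))) i))"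

definition subresultant :: "'a::comm_ring_1 poly list \<Rightarrow> nat list \<Rightarrow> 'a poly" where
  "subresultant F \<delta> = det_poly (gen_sylvester_mat F \<delta>)"

definition mult_conj :: "real poly \<Rightarrow> nat \<Rightarrow> nat" where
  "mult_conj P j = card {r::complex. poly (map_poly complex_of_real P) r = 0
                                 \<and> order r (map_poly complex_of_real P) \<ge> j}"

end

theory Submission
  imports Defs "HOL-Computational_Algebra.Fundamental_Theorem_Algebra"
begin

text \<open>Every combination of the rows of the generalized Sylvester matrix of \<open>P, P', \<dots>, P^(i)\<close> is
  \<open>\<Sum>\<^sub>j A\<^sub>j P^(j)\<close> with \<open>deg A\<^sub>j < \<mu>'\<^sub>j\<close> (\<open>\<mu>'\<close> the conjugate of the multiplicity
  partition), and the determinant polynomial is such a combination.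
  Over \<open>\<complex>\<close> each \<open>P^(j)\<close>, \<open>j \<le> i\<close>, is divisible by \<open>Q = \<Prod>\<^bsub>\<mu>\<^sub>k > i\<^esub> (x - r\<^sub>k)^(\<mu>\<^sub>k - i)\<close>, and
  \<open>\<mu>'\<^sub>1 + \<dots> + \<mu>'\<^sub>i + deg Q = n\<close> says that \<open>deg Q\<close> is the number of columns minus the number of rows.
  A nontrivial such combination cannot vanish: at a root of multiplicity \<open>\<mu> \<ge> j\<close> the
  derivatives of order \<open>< j\<close> vanish to order \<open>> \<mu> - j\<close> while \<open>P^(j)\<close> vanishes to order exactly
  \<open>\<mu> - j\<close>, so the top nonzero \<open>A\<^sub>j\<close> would have at least \<open>\<mu>'\<^sub>j\<close> roots. Hence no nonzero combination
  has degree below \<open>deg Q\<close>, the leading minor of the determinant polynomial is regular, and the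
  subresultant is a nonzero constant multiple of \<open>Q\<close>. Lying in the ideal generated by the
  \<open>P^(j)\<close> and dividing each of them, it is also associate to their gcd.\<close>

section \<open>Derivatives and root multiplicities\<close>

definition conj_mult :: "'a::idom poly \<Rightarrow> nat \<Rightarrow> nat" where
  "conj_mult p j = card {r. poly p r = 0 \<and> j \<le> order r p}"

definition excess_root_prod :: "'a::idom poly \<Rightarrow> nat \<Rightarrow> 'a poly" where
  "excess_root_prod p i = (\<Prod>r\<in>{r. poly p r = 0 \<and> i < order r p}. [:-r, 1:] ^ (order r p - i))"

lemma higher_pderiv_nonzero:
  fixes p :: "'a::{idom,semiring_char_0} poly"
  assumes "p \<noteq> 0" "j \<le> degree p"
  shows "(pderiv ^^ j) p \<noteq> 0"
proof
  assume h: "(pderiv ^^ j) p = 0"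
  have "coeff ((pderiv ^^ j) p) (degree p - j)
      = pochhammer (of_nat (Suc (degree p - j))) j * coeff p (degree p - j + j)"
    by (rule coeff_higher_pderiv)
  also have "degree p - j + j = degree p" using assms by simp
  finally have "pochhammer (of_nat (Suc (degree p - j))) j * lead_coeff p = (0::'a)"
    using h by simp
  moreover have "pochhammer (of_nat (Suc (degree p - j))) j = (of_nat (pochhammer (Suc (degree p - j)) j) :: 'a)"
    by (simp only: pochhammer_of_nat)
  moreover have "pochhammer (Suc (degree p - j)) j > 0" by (rule pochhammer_pos) simp
  ultimately show False using assms(1) by simp
qed

lemma order_higher_pderiv:
  fixes p :: "'a::field_char_0 poly"
  assumes "p \<noteq> 0" "j \<le> order r p"
  shows "order r ((pderiv ^^ j) p) = order r p - j"
  using assms(2)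
proof (induction j)
  case (Suc j)
  have "order r p \<le> degree p" using assms(1) by (rule order_degree)
  then have nz: "(pderiv ^^ j) p \<noteq> 0" "pderiv ((pderiv ^^ j) p) \<noteq> 0"
    using higher_pderiv_nonzero[OF assms(1), of j] higher_pderiv_nonzero[OF assms(1), of "Suc j"] Suc.prems
    by simp_all
  have IH: "order r ((pderiv ^^ j) p) = order r p - j" using Suc by simp
  then have "poly ((pderiv ^^ j) p) r = 0" using Suc.prems order_root by fastforce
  from order_pderiv[OF nz(1) this] IH show ?case by simp
qed simp

text \<open>Every root of order \<open>\<mu> \<ge> s\<close> of \<open>p\<close> is a root of \<open>A s\<close>: it is a root of order \<open>> \<mu> - s\<close> of
  the lower derivatives but of order exactly \<open>\<mu> - s\<close> of \<open>(pderiv ^^ s) p\<close>.\<close>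
lemma higher_pderiv_combination_top_eq_0:
  fixes p :: "'a::field_char_0 poly" and A :: "nat \<Rightarrow> 'a poly"
  assumes p: "p \<noteq> 0" and s: "1 \<le> s"
    and deg: "\<And>k. conj_mult p s \<le> k \<Longrightarrow> coeff (A s) k = 0"
    and sum: "(\<Sum>j\<le>s. A j * (pderiv ^^ j) p) = 0"
  shows "A s = 0"
proof (rule ccontr)
  assume nz: "A s \<noteq> 0"
  have top: "A s * (pderiv ^^ s) p = - (\<Sum>j<s. A j * (pderiv ^^ j) p)"
    using sum by (simp add: lessThan_Suc_atMost[symmetric] eq_neg_iff_add_eq_0 add.commute)
  have root: "poly (A s) r = 0" if r: "poly p r = 0" "s \<le> order r p" for r
  proof (rule ccontr)
    assume nr: "poly (A s) r \<noteq> 0"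
    define W where "W = [:-r, 1:] ^ (order r p - s + 1)"
    have "W dvd (\<Sum>j<s. A j * (pderiv ^^ j) p)"
    proof (rule dvd_sum)
      fix j assume "j \<in> {..<s}"
      then have "order r p - s + 1 \<le> order r ((pderiv ^^ j) p)"
        using order_higher_pderiv[OF p, of j r] r by auto
      then have "W dvd (pderiv ^^ j) p" unfolding W_def order_divides by simp
      then show "W dvd A j * (pderiv ^^ j) p" by simp
    qed
    then have "W dvd A s * (pderiv ^^ s) p" unfolding top by simp
    moreover have "(pderiv ^^ s) p \<noteq> 0"
      using higher_pderiv_nonzero[OF p, of s] order_degree[OF p, of r] r by simp
    ultimately show False
      using nz order_0I[OF nr] order_higher_pderiv[OF p, of s r] r
      unfolding W_def order_divides by (simp add: order_mult)
  qed
  have "degree (A s) < conj_mult p s"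
    using deg[of "degree (A s)"] nz by (meson leading_coeff_0_iff not_le)
  also have "conj_mult p s \<le> card {r. poly (A s) r = 0}"
    unfolding conj_mult_def by (rule card_mono) (use poly_roots_finite[OF nz] root in auto)
  also have "\<dots> \<le> degree (A s)" by (rule card_poly_roots_bound[OF nz])
  finally show False by simp
qed

lemma higher_pderiv_combination_eq_0:
  fixes p :: "'a::field_char_0 poly" and A :: "nat \<Rightarrow> 'a poly"
  assumes p: "p \<noteq> 0"
    and deg: "\<And>j k. 1 \<le> j \<Longrightarrow> j \<le> i \<Longrightarrow> conj_mult p j \<le> k \<Longrightarrow> coeff (A j) k = 0"
    and sum: "(\<Sum>j\<le>i. A j * (pderiv ^^ j) p) = 0"
    and j: "j \<le> i"
  shows "A j = 0"
  using deg sum j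
proof (induction i arbitrary: j)
  case 0
  then show ?case using p by simp
next
  case (Suc i)
  have top: "A (Suc i) = 0"
    by (rule higher_pderiv_combination_top_eq_0[OF p]) (use Suc.prems in auto)
  then have "(\<Sum>j\<le>i. A j * (pderiv ^^ j) p) = 0" using Suc.prems(2) by simp
  with Suc show ?case by (cases "j = Suc i") (auto simp: top)
qed

lemma prod_linear_powers_dvd:
  fixes p :: "'a::idom poly"
  assumes "finite S" "\<And>r. r \<in> S \<Longrightarrow> [:-r, 1:] ^ e r dvd p"
  shows "(\<Prod>r\<in>S. [:-r, 1:] ^ e r) dvd p"
  using assms
proof (induction S rule: finite_induct)
  case (insert a S)
  show ?case
  proof (cases "p = 0")
    case False
    obtain k where k: "p = (\<Prod>r\<in>S. [:-r, 1:] ^ e r) * k"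
      using insert by (auto elim: dvdE)
    have "poly (\<Prod>r\<in>S. [:-r, 1:] ^ e r) a \<noteq> 0"
      using insert.hyps by (auto simp: poly_prod prod_zero_iff)
    then have "order a p = order a k" using False k by (simp add: order_mult order_0I)
    then have "[:-a, 1:] ^ e a dvd k" using insert.prems[of a] False by (simp add: order_divides)
    then show ?thesis using insert.hyps k by (simp add: mult_dvd_mono mult.commute)
  qed simp
qed simp

lemma excess_root_prod_dvd_higher_pderiv:
  fixes p :: "'a::field_char_0 poly"
  assumes p: "p \<noteq> 0" and j: "j \<le> i"
  shows "excess_root_prod p i dvd (pderiv ^^ j) p"
  unfolding excess_root_prod_def
proof (rule prod_linear_powers_dvd)
  show "finite {r. poly p r = 0 \<and> i < order r p}"
    using poly_roots_finite[OF p] by simp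
  fix r assume "r \<in> {r. poly p r = 0 \<and> i < order r p}"
  then have "order r p - i \<le> order r ((pderiv ^^ j) p)"
    using order_higher_pderiv[OF p, of j r] j by simp
  then show "[:-r, 1:] ^ (order r p - i) dvd (pderiv ^^ j) p"
    unfolding order_divides by simp
qed

lemma degree_excess_root_prod:
  fixes p :: "'a::field poly"
  assumes "p \<noteq> 0"
  shows "degree (excess_root_prod p i) = (\<Sum>r | poly p r = 0. order r p - i)"
proof -
  have "degree (excess_root_prod p i) = (\<Sum>r | poly p r = 0 \<and> i < order r p. order r p - i)"
    unfolding excess_root_prod_def by (simp add: degree_prod_sum_eq degree_linear_power)
  also have "\<dots> = (\<Sum>r | poly p r = 0. order r p - i)"
    by (rule sum.mono_neutral_left) (use poly_roots_finite[OF assms] in auto)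
  finally show ?thesis .
qed

lemma degree_eq_sum_order:
  fixes p :: "complex poly"
  assumes "p \<noteq> 0"
  shows "degree p = (\<Sum>r | poly p r = 0. order r p)"
proof -
  have "degree p = degree (smult (lead_coeff p) (\<Prod>r | poly p r = 0. [:-r, 1:] ^ order r p))"
    by (simp only: complex_poly_decompose)
  also have "\<dots> = degree (\<Prod>r | poly p r = 0. [:-r, 1:] ^ order r p)"
    using assms by simp
  finally have "degree p = degree (\<Prod>r | poly p r = 0. [:-r, 1:] ^ order r p)" .
  then show ?thesis by (simp add: degree_prod_sum_eq degree_linear_power)
qed

lemma sum_card_levels:
  fixes f :: "'a \<Rightarrow> nat"
  assumes "finite Z"
  shows "(\<Sum>j=1..i. card {r\<in>Z. j \<le> f r}) = (\<Sum>r\<in>Z. min (f r) i)"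
proof -
  have "(\<Sum>j=1..i. card {r\<in>Z. j \<le> f r}) = (\<Sum>j=1..i. \<Sum>r\<in>Z. if j \<le> f r then 1 else 0)"
    using assms by (simp add: sum.inter_filter[symmetric])
  also have "\<dots> = (\<Sum>r\<in>Z. card {j\<in>{1..i}. j \<le> f r})"
    by (subst sum.swap) (simp add: sum.inter_filter[symmetric])
  also have "\<dots> = (\<Sum>r\<in>Z. min (f r) i)"
  proof (rule sum.cong)
    fix r
    have "{j\<in>{1..i}. j \<le> f r} = {1..min (f r) i}" by auto
    then show "card {j\<in>{1..i}. j \<le> f r} = min (f r) i" by simp
  qed simp
  finally show ?thesis .
qed

text \<open>A root of multiplicity \<open>\<mu>\<close> contributes \<open>min \<mu> i\<close> to the first sum and \<open>\<mu> - i\<close> to the degree.\<close>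
lemma sum_conj_mult_add_degree_excess_root_prod:
  fixes p :: "complex poly"
  assumes p: "p \<noteq> 0"
  shows "(\<Sum>j=1..i. conj_mult p j) + degree (excess_root_prod p i) = degree p"
proof -
  let ?Z = "{r. poly p r = 0}"
  have "(\<Sum>j=1..i. conj_mult p j) = (\<Sum>j=1..i. card {r\<in>?Z. j \<le> order r p})"
    unfolding conj_mult_def by simp
  also have "\<dots> = (\<Sum>r\<in>?Z. min (order r p) i)"
    using poly_roots_finite[OF p] by (rule sum_card_levels)
  finally have "(\<Sum>j=1..i. conj_mult p j) + degree (excess_root_prod p i)
      = (\<Sum>r\<in>?Z. min (order r p) i + (order r p - i))"
    by (simp add: degree_excess_root_prod[OF p] sum.distrib)
  also have "\<dots> = degree p"
    unfolding degree_eq_sum_order[OF p] by (rule sum.cong) auto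
  finally show ?thesis .
qed

lemma conj_mult_1_pos:
  fixes p :: "complex poly"
  assumes "0 < degree p"
  shows "0 < conj_mult p 1"
proof -
  have p: "p \<noteq> 0" using assms by auto
  have "{r. poly p r = 0} \<noteq> {}"
  proof
    assume "{r. poly p r = 0} = {}"
    then show False using assms degree_eq_sum_order[OF p] by simp
  qed
  moreover have "{r. poly p r = 0 \<and> 1 \<le> order r p} = {r. poly p r = 0}"
    using p order_root by (auto simp: Suc_le_eq)
  ultimately show ?thesis
    unfolding conj_mult_def using poly_roots_finite[OF p] by (simp add: card_gt_0_iff)
qed

lemma dvd_degree_le_imp_eq_smult:
  fixes p q :: "'a::field poly"
  assumes "p dvd q" "q \<noteq> 0" "degree q \<le> degree p"
  shows "\<exists>c. c \<noteq> 0 \<and> q = smult c p"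
proof -
  obtain k where k: "q = p * k" using assms(1) by (elim dvdE)
  then have "p \<noteq> 0" "k \<noteq> 0" using assms(2) by auto
  then have "degree k = 0" using k assms(3) by (simp add: degree_mult_eq)
  then obtain c where "k = [:c:]" by (elim degree_eq_zeroE)
  then show ?thesis using k \<open>k \<noteq> 0\<close> by (intro exI[of _ c]) auto
qed

lemma map_poly_of_real_mult:
  "map_poly complex_of_real (p * q) = map_poly complex_of_real p * map_poly complex_of_real q"
  by (rule poly_eqI) (simp add: coeff_map_poly coeff_mult of_real_sum)

lemma map_poly_of_real_add:
  "map_poly complex_of_real (p + q) = map_poly complex_of_real p + map_poly complex_of_real q"
  by (rule poly_eqI) (simp add: coeff_map_poly)

lemma map_poly_of_real_sum:
  "map_poly complex_of_real (\<Sum>j\<in>A. f j) = (\<Sum>j\<in>A. map_poly complex_of_real (f j))"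
  by (rule poly_eqI) (simp add: coeff_map_poly coeff_sum)

lemma map_poly_of_real_pderiv:
  "map_poly complex_of_real (pderiv p) = pderiv (map_poly complex_of_real p)"
  by (rule poly_eqI) (simp add: coeff_map_poly coeff_pderiv)

lemma map_poly_of_real_higher_pderiv:
  "map_poly complex_of_real ((pderiv ^^ j) p) = (pderiv ^^ j) (map_poly complex_of_real p)"
  by (induction j) (simp_all add: map_poly_of_real_pderiv)

lemma map_poly_of_real_dvd_iff:
  fixes p q :: "real poly"
  shows "map_poly complex_of_real p dvd map_poly complex_of_real q \<longleftrightarrow> p dvd q"
proof
  assume dvd: "map_poly complex_of_real p dvd map_poly complex_of_real q"
  show "p dvd q"
  proof (rule ccontr)
    assume nd: "\<not> p dvd q"
    then have p: "p \<noteq> 0" using dvd by (auto simp: map_poly_eq_0_iff)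
    from nd have r: "q mod p \<noteq> 0" by (simp add: mod_eq_0_iff_dvd)
    have "map_poly complex_of_real q
        = map_poly complex_of_real p * map_poly complex_of_real (q div p) + map_poly complex_of_real (q mod p)"
      by (simp flip: map_poly_of_real_mult map_poly_of_real_add)
    then have "map_poly complex_of_real p dvd map_poly complex_of_real (q mod p)"
      using dvd by (simp add: dvd_add_right_iff)
    moreover have "map_poly complex_of_real (q mod p) \<noteq> 0" using r by (simp add: map_poly_eq_0_iff)
    ultimately have "degree p \<le> degree (q mod p)"
      by (metis dvd_imp_degree_le degree_map_poly of_real_eq_0_iff)
    with degree_mod_less'[OF p r] show False by simp
  qed
next
  assume "p dvd q"
  then obtain k where "q = p * k" by (elim dvdE)
  then show "map_poly complex_of_real p dvd map_poly complex_of_real q"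
    by (simp add: map_poly_of_real_mult)
qed

section \<open>Determinant polynomials of coefficient matrices\<close>

definition coeff_mat :: "'a::comm_ring_1 poly list \<Rightarrow> nat \<Rightarrow> 'a mat" where
  "coeff_mat rs q = mat (length rs) q (\<lambda>(r, c). coeff (rs ! r) (q - 1 - c))"

definition dp_minor :: "'a::comm_ring_1 mat \<Rightarrow> nat \<Rightarrow> 'a mat" where
  "dp_minor M i = mat (dim_row M) (dim_row M) (\<lambda>(r, c).
     if c < dim_row M - 1 then M $$ (r, c) else M $$ (r, dim_col M - 1 - i))"

lemma dim_coeff_mat [simp]:
  "dim_row (coeff_mat rs q) = length rs" "dim_col (coeff_mat rs q) = q"
  by (simp_all add: coeff_mat_def)

lemma dim_dp_minor [simp]:
  "dim_row (dp_minor M i) = dim_row M" "dim_col (dp_minor M i) = dim_row M"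
  by (simp_all add: dp_minor_def)

lemma dp_minor_carrier: "dp_minor M i \<in> carrier_mat (dim_row M) (dim_row M)"
  by (rule carrier_matI) simp_all

lemma det_poly_eq_sum_dp_minor:
  "det_poly M = (\<Sum>i = 0..dim_col M - dim_row M. monom (det (dp_minor M i)) i)"
  unfolding det_poly_def dp_minor_def Let_def ..

lemma dp_minor_coeff_mat_index:
  assumes "r < length rs" "c < length rs" "length rs \<le> q" "i < q"
  shows "dp_minor (coeff_mat rs q) i $$ (r, c)
    = (if c < length rs - 1 then coeff (rs ! r) (q - 1 - c) else coeff (rs ! r) i)"
  using assms by (auto simp: dp_minor_def coeff_mat_def)

text \<open>The minors differ only in their last column, so they share its cofactors.\<close>
lemma det_dp_minor_coeff_mat_laplace:
  assumes p: "1 \<le> length rs" "length rs \<le> q" and i: "i < q"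
  shows "det (dp_minor (coeff_mat rs q) i)
    = (\<Sum>r<length rs. coeff (rs ! r) i * cofactor (dp_minor (coeff_mat rs q) 0) r (length rs - 1))"
proof -
  let ?p = "length rs" and ?M = "coeff_mat rs q"
  have "det (dp_minor ?M i) = (\<Sum>r<?p. dp_minor ?M i $$ (r, ?p - 1) * cofactor (dp_minor ?M i) r (?p - 1))"
    using dp_minor_carrier[of ?M i] p by (intro laplace_expansion_column) auto
  also have "\<dots> = (\<Sum>r<?p. coeff (rs ! r) i * cofactor (dp_minor ?M 0) r (?p - 1))"
  proof (rule sum.cong)
    fix r assume r: "r \<in> {..<?p}"
    have "mat_delete (dp_minor ?M i) r (?p - 1) = mat_delete (dp_minor ?M 0) r (?p - 1)"
      by (rule eq_matI) (use p i r in \<open>auto simp: mat_delete_def dp_minor_coeff_mat_index\<close>)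
    then show "dp_minor ?M i $$ (r, ?p - 1) * cofactor (dp_minor ?M i) r (?p - 1)
        = coeff (rs ! r) i * cofactor (dp_minor ?M 0) r (?p - 1)"
      using p i r by (simp add: dp_minor_coeff_mat_index cofactor_def)
  qed simp
  finally show ?thesis .
qed

text \<open>For \<open>i > q - p\<close> the last column repeats column \<open>q - 1 - i\<close>.\<close>
lemma det_dp_minor_coeff_mat_eq_0:
  assumes p: "1 \<le> length rs" "length rs \<le> q" and i: "q - length rs < i" "i < q"
  shows "det (dp_minor (coeff_mat rs q) i) = 0"
proof (rule det_identical_columns[OF dp_minor_carrier])
  let ?p = "length rs"
  show "q - 1 - i \<noteq> ?p - 1" "q - 1 - i < dim_row (coeff_mat rs q)" "?p - 1 < dim_row (coeff_mat rs q)"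
    using p i by auto
  show "col (dp_minor (coeff_mat rs q) i) (q - 1 - i) = col (dp_minor (coeff_mat rs q) i) (?p - 1)"
    by (rule eq_vecI) (use p i in \<open>auto simp: dp_minor_coeff_mat_index\<close>)
qed

lemma det_poly_coeff_mat_eq_combination:
  assumes p: "1 \<le> length rs" "length rs \<le> q"
    and deg: "\<And>r k. r < length rs \<Longrightarrow> q \<le> k \<Longrightarrow> coeff (rs ! r) k = 0"
  shows "det_poly (coeff_mat rs q)
    = (\<Sum>r<length rs. smult (cofactor (dp_minor (coeff_mat rs q) 0) r (length rs - 1)) (rs ! r))"
proof (rule poly_eqI)
  fix k
  let ?p = "length rs" and ?M = "coeff_mat rs q"
  let ?cof = "\<lambda>r. cofactor (dp_minor ?M 0) r (?p - 1)"
  have "coeff (det_poly ?M) k = (\<Sum>i = 0..q - ?p. if i = k then det (dp_minor ?M i) else 0)"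
    unfolding det_poly_eq_sum_dp_minor by (simp add: coeff_sum coeff_monom)
  also have "\<dots> = (if k \<le> q - ?p then det (dp_minor ?M k) else 0)"
    by (simp add: sum.delta')
  also have "\<dots> = (\<Sum>r<?p. coeff (rs ! r) k * ?cof r)"
  proof (cases "k < q")
    case True
    then show ?thesis
      using det_dp_minor_coeff_mat_laplace[OF p True] det_dp_minor_coeff_mat_eq_0[OF p _ True] by auto
  qed (use deg p in auto)
  also have "\<dots> = coeff (\<Sum>r<?p. smult (?cof r) (rs ! r)) k"
    by (simp add: coeff_sum mult.commute)
  finally show "coeff (det_poly ?M) k = coeff (\<Sum>r<?p. smult (?cof r) (rs ! r)) k" .
qed

text \<open>The coefficients \<open>v\<close> form a kernel vector of the transposed top minor.\<close>
lemma singular_top_minor_imp_low_degree_combination: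
  fixes rs :: "'a::field poly list"
  assumes p: "1 \<le> length rs" "length rs \<le> q"
    and deg: "\<And>r k. r < length rs \<Longrightarrow> q \<le> k \<Longrightarrow> coeff (rs ! r) k = 0"
    and sing: "det (dp_minor (coeff_mat rs q) (q - length rs)) = 0"
  obtains v where "\<exists>r<length rs. v r \<noteq> 0"
    and "\<And>k. q - length rs \<le> k \<Longrightarrow> coeff (\<Sum>r<length rs. smult (v r) (rs ! r)) k = 0"
proof -
  let ?p = "length rs"
  let ?A = "dp_minor (coeff_mat rs q) (q - ?p)"
  have A: "?A \<in> carrier_mat ?p ?p" using dp_minor_carrier[of "coeff_mat rs q"] by simp
  have "det (transpose_mat ?A) = 0" using sing det_transpose[OF A] by simp
  then obtain w where w: "w \<in> carrier_vec ?p" "w \<noteq> 0\<^sub>v ?p" "transpose_mat ?A *\<^sub>v w = 0\<^sub>v ?p"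
    using det_0_iff_vec_prod_zero[of "transpose_mat ?A" ?p] A by auto
  have col: "(\<Sum>r<?p. w $ r * coeff (rs ! r) (q - 1 - c)) = 0" if c: "c < ?p" for c
  proof -
    have "?A $$ (r, c) = coeff (rs ! r) (q - 1 - c)" if "r < ?p" for r
    proof (cases "c < ?p - 1")
      case False
      then have "q - 1 - c = q - ?p" using c p by simp
      then show ?thesis using dp_minor_coeff_mat_index[of r rs c q "q - ?p"] that c p False by simp
    qed (use dp_minor_coeff_mat_index[of r rs c q "q - ?p"] that c p in simp)
    then have "(transpose_mat ?A *\<^sub>v w) $ c = (\<Sum>r<?p. w $ r * coeff (rs ! r) (q - 1 - c))"
      using c w(1) A by (auto simp: scalar_prod_def col_def lessThan_atLeast0 mult.commute intro!: sum.cong)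
    then show ?thesis using w(3) c by simp
  qed
  show ?thesis
  proof
    show "\<exists>r<?p. w $ r \<noteq> 0" using w(1,2) by (auto intro!: eq_vecI)
    fix k assume k: "q - ?p \<le> k"
    show "coeff (\<Sum>r<?p. smult (w $ r) (rs ! r)) k = 0"
    proof (cases "k < q")
      case True
      then show ?thesis using col[of "q - 1 - k"] k p by (simp add: coeff_sum)
    qed (use deg in \<open>simp add: coeff_sum\<close>)
  qed
qed

lemma det_poly_coeff_mat_exact_degree:
  fixes rs :: "'a::field poly list"
  assumes p: "1 \<le> length rs" "length rs \<le> q"
    and deg: "\<And>r k. r < length rs \<Longrightarrow> q \<le> k \<Longrightarrow> coeff (rs ! r) k = 0"
    and indep: "\<And>v. (\<And>k. q - length rs \<le> k \<Longrightarrow> coeff (\<Sum>r<length rs. smult (v r) (rs ! r)) k = 0)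
                  \<Longrightarrow> \<forall>r<length rs. v r = 0"
  shows "det_poly (coeff_mat rs q) \<noteq> 0" "degree (det_poly (coeff_mat rs q)) = q - length rs"
proof -
  let ?M = "coeff_mat rs q" and ?p = "length rs"
  have "det (dp_minor ?M (q - ?p)) \<noteq> 0"
  proof
    assume "det (dp_minor ?M (q - ?p)) = 0"
    then obtain v where "\<exists>r<?p. v r \<noteq> 0"
      and "\<And>k. q - ?p \<le> k \<Longrightarrow> coeff (\<Sum>r<?p. smult (v r) (rs ! r)) k = 0"
      using singular_top_minor_imp_low_degree_combination[OF p deg] by blast
    with indep show False by blast
  qed
  moreover have "coeff (det_poly ?M) (q - ?p) = det (dp_minor ?M (q - ?p))"
    unfolding det_poly_eq_sum_dp_minor by (simp add: coeff_sum coeff_monom sum.delta')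
  moreover have "degree (det_poly ?M) \<le> q - ?p"
    unfolding det_poly_eq_sum_dp_minor by (rule degree_le) (simp add: coeff_sum coeff_monom sum.delta')
  ultimately show "det_poly ?M \<noteq> 0" "degree (det_poly ?M) = q - ?p"
    using le_degree[of "det_poly ?M" "q - ?p"] by auto
qed

section \<open>Rows of the generalized Sylvester matrix\<close>

definition shifted_block :: "'a::comm_semiring_1 poly \<Rightarrow> nat \<Rightarrow> 'a poly list" where
  "shifted_block f d = map (\<lambda>k. monom 1 k * f) (rev [0..<d])"

definition block_rows :: "('a::comm_semiring_1 poly \<times> nat) list \<Rightarrow> 'a poly list" where
  "block_rows ps = concat (map (\<lambda>(f, d). shifted_block f d) ps)"

definition block_multiplier :: "(nat \<Rightarrow> 'a::comm_semiring_1) \<Rightarrow> nat \<Rightarrow> 'a poly" where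
  "block_multiplier v d = (\<Sum>r<d. monom (v r) (d - 1 - r))"

lemma sres_row_polys_eq_block_rows:
  "sres_row_polys F \<delta> = block_rows (zip F (sres_delta0 F \<delta> # \<delta>))"
  unfolding sres_row_polys_def block_rows_def shifted_block_def ..

lemma gen_sylvester_mat_eq_coeff_mat:
  "gen_sylvester_mat F \<delta> = coeff_mat (sres_row_polys F \<delta>) (sres_delta0 F \<delta> + degree (F ! 0))"
  unfolding gen_sylvester_mat_def coeff_mat_def Let_def ..

lemma length_block_rows: "length (block_rows ps) = sum_list (map snd ps)"
  unfolding block_rows_def shifted_block_def by (induction ps) auto

lemma block_rows_Cons: "block_rows ((f, d) # ps) = shifted_block f d @ block_rows ps"
  by (simp add: block_rows_def)

lemma coeff_block_multiplier:
  "coeff (block_multiplier v d) k = (if k < d then v (d - 1 - k) else 0)"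
proof -
  have "coeff (block_multiplier v d) k = (\<Sum>r<d. if r = d - 1 - k \<and> k < d then v r else 0)"
    unfolding block_multiplier_def coeff_sum coeff_monom by (rule sum.cong) auto
  then show ?thesis by (simp add: sum.delta)
qed

lemma sum_lessThan_add: "(\<Sum>i<m + (n::nat). g i) = (\<Sum>i<m. g i) + (\<Sum>i<n. g (i + m))"
  by (induction n) (simp_all add: add_ac)

lemma combination_block_rows_Cons:
  "(\<Sum>r<length (block_rows ((f, d) # ps)). smult (v r) (block_rows ((f, d) # ps) ! r))
   = block_multiplier v d * f + (\<Sum>r<length (block_rows ps). smult (v (r + d)) (block_rows ps ! r))"
proof -
  have "(\<Sum>r<d. smult (v r) (block_rows ((f, d) # ps) ! r)) = block_multiplier v d * f"
    unfolding block_multiplier_def sum_distrib_right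
    by (rule sum.cong) (simp_all add: block_rows_Cons nth_append shifted_block_def rev_nth
                                      smult_monom flip: mult_smult_left)
  moreover have "(\<Sum>r<length (block_rows ps). smult (v (r + d)) (block_rows ((f, d) # ps) ! (r + d)))
      = (\<Sum>r<length (block_rows ps). smult (v (r + d)) (block_rows ps ! r))"
    by (simp add: block_rows_Cons nth_append shifted_block_def)
  ultimately show ?thesis
    by (simp add: block_rows_Cons shifted_block_def sum_lessThan_add)
qed

lemma combination_block_rows:
  "\<exists>A. (\<Sum>r<length (block_rows ps). smult (v r) (block_rows ps ! r)) = (\<Sum>j<length ps. A j * fst (ps ! j))
     \<and> (\<forall>j<length ps. \<forall>k\<ge>snd (ps ! j). coeff (A j) k = 0)
     \<and> ((\<forall>j<length ps. A j = 0) \<longrightarrow> (\<forall>r<length (block_rows ps). v r = 0))"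
proof (induction ps arbitrary: v)
  case Nil
  then show ?case by (simp add: block_rows_def)
next
  case (Cons p ps)
  obtain f d where p: "p = (f, d)" by (cases p)
  obtain A' where A':
    "(\<Sum>r<length (block_rows ps). smult (v (r + d)) (block_rows ps ! r)) = (\<Sum>j<length ps. A' j * fst (ps ! j))"
    "\<forall>j<length ps. \<forall>k\<ge>snd (ps ! j). coeff (A' j) k = 0"
    "(\<forall>j<length ps. A' j = 0) \<longrightarrow> (\<forall>r<length (block_rows ps). v (r + d) = 0)"
    using Cons.IH[of "\<lambda>r. v (r + d)"] by blast
  define A where "A = case_nat (block_multiplier v d) A'"
  have "(\<Sum>r<length (block_rows (p # ps)). smult (v r) (block_rows (p # ps) ! r))
      = (\<Sum>j<length (p # ps). A j * fst ((p # ps) ! j))"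
    unfolding length_Cons sum.lessThan_Suc_shift using A'(1)
    by (simp add: p combination_block_rows_Cons A_def)
  moreover have "\<forall>j<length (p # ps). \<forall>k\<ge>snd ((p # ps) ! j). coeff (A j) k = 0"
    using A'(2) by (auto simp: p A_def coeff_block_multiplier less_Suc_eq_0_disj)
  moreover have "\<forall>r<length (block_rows (p # ps)). v r = 0" if zero: "\<forall>j<length (p # ps). A j = 0"
  proof (intro allI impI)
    fix r assume r: "r < length (block_rows (p # ps))"
    have low: "block_multiplier v d = 0" using zero[rule_format, of 0] by (simp add: A_def)
    have "A' j = 0" if "j < length ps" for j using zero[rule_format, of "Suc j"] that by (simp add: A_def)
    then have high: "\<forall>r<length (block_rows ps). v (r + d) = 0" using A'(3) by blast
    show "v r = 0"
    proof (cases "r < d")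
      case True
      then show ?thesis using low coeff_block_multiplier[of v d "d - 1 - r"] by simp
    next
      case False
      then show ?thesis using high[rule_format, of "r - d"] r by (simp add: p block_rows_Cons shifted_block_def)
    qed
  qed
  ultimately show ?case by blast
qed

lemma row_degree_le_sylvester_width:
  assumes j: "1 \<le> j" "j < length F" and d: "\<delta> ! (j - 1) \<noteq> 0"
  shows "degree (F ! j) + \<delta> ! (j - 1) \<le> sres_delta0 F \<delta> + degree (F ! 0)"
proof -
  define S where "S = {degree (F ! i) + \<delta> ! (i - 1) | i. 1 \<le> i \<and> i < length F \<and> \<delta> ! (i - 1) \<noteq> 0}"
  have "S \<subseteq> (\<lambda>i. degree (F ! i) + \<delta> ! (i - 1)) ` {..<length F}" unfolding S_def by auto
  then have "finite S" by (rule finite_subset) simp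
  moreover have mem: "degree (F ! j) + \<delta> ! (j - 1) \<in> S" unfolding S_def using j d by blast
  ultimately have "degree (F ! j) + \<delta> ! (j - 1) \<le> Max S" by (rule Max_ge)
  moreover have "sres_delta0 F \<delta> = (if S \<noteq> {} \<and> Max S \<ge> degree (F ! 0) then Max S - degree (F ! 0) else 1)"
    unfolding sres_delta0_def S_def Let_def ..
  ultimately show ?thesis using mem by auto
qed

lemma coeff_sres_row_polys_eq_0:
  fixes F :: "'a::comm_ring_1 poly list"
  assumes len: "length F = Suc (length \<delta>)" and r: "r < length (sres_row_polys F \<delta>)"
    and k: "sres_delta0 F \<delta> + degree (F ! 0) \<le> k"
  shows "coeff (sres_row_polys F \<delta> ! r) k = 0"
proof -
  let ?D = "sres_delta0 F \<delta>"
  have "sres_row_polys F \<delta> ! r \<in> set (block_rows (zip F (?D # \<delta>)))"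
    using r unfolding sres_row_polys_eq_block_rows by simp
  then obtain f d m where fd: "(f, d) \<in> set (zip F (?D # \<delta>))" and m: "m < d"
    and row: "sres_row_polys F \<delta> ! r = monom 1 m * f"
    unfolding block_rows_def shifted_block_def by auto
  from fd obtain j where j: "j < length F" "f = F ! j" "d = (?D # \<delta>) ! j"
    using len by (auto simp: in_set_zip)
  have "m + degree f < ?D + degree (F ! 0)"
  proof (cases j)
    case (Suc j')
    then show ?thesis using j m row_degree_le_sylvester_width[of j F \<delta>] by simp
  qed (use j m in simp)
  moreover have "degree (monom 1 m * f) \<le> m + degree f"
    by (meson add_right_mono degree_monom_le degree_mult_le order_trans)
  ultimately show ?thesis using k row by (intro coeff_eq_0) simp
qed

section \<open>Subresultants of a polynomial and its derivatives\<close>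

definition higher_pderivs :: "'a::{comm_semiring_1,semiring_no_zero_divisors} poly \<Rightarrow> nat \<Rightarrow> 'a poly list" where
  "higher_pderivs P i = map (\<lambda>k. (pderiv ^^ k) P) [0..<i+1]"

definition mult_conj_list :: "real poly \<Rightarrow> nat \<Rightarrow> nat list" where
  "mult_conj_list P i = map (mult_conj P) [1..<i+1]"

locale derivative_subresultant =
  fixes P :: "real poly" and i :: nat
  assumes i_pos: "1 \<le> i" and i_le_degree: "i \<le> degree P"
begin

abbreviation F :: "real poly list" where
  "F \<equiv> higher_pderivs P i"

abbreviation \<delta> :: "nat list" where
  "\<delta> \<equiv> mult_conj_list P i"

abbreviation Pc :: "complex poly" where
  "Pc \<equiv> map_poly complex_of_real P"

abbreviation rows :: "real poly list" where
  "rows \<equiv> sres_row_polys F \<delta>"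

abbreviation width :: nat where
  "width \<equiv> sres_delta0 F \<delta> + degree P"

lemma P_nonzero: "P \<noteq> 0"
  using i_pos i_le_degree by auto

lemma Pc_nonzero: "Pc \<noteq> 0"
  using P_nonzero by (simp add: map_poly_eq_0_iff)

lemma degree_Pc: "degree Pc = degree P"
  by (simp add: degree_map_poly)

lemma length_F: "length F = Suc (length \<delta>)" and length_\<delta>: "length \<delta> = i"
  by (simp_all add: higher_pderivs_def mult_conj_list_def)

lemma nth_F: "j \<le> i \<Longrightarrow> F ! j = (pderiv ^^ j) P"
  unfolding higher_pderivs_def by (simp del: upt_Suc add: nth_upt)

lemma nth_\<delta>: "1 \<le> j \<Longrightarrow> j \<le> i \<Longrightarrow> \<delta> ! (j - 1) = conj_mult Pc j"
  unfolding mult_conj_list_def by (simp del: upt_Suc add: nth_upt mult_conj_def conj_mult_def)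

lemma length_rows: "length rows = sres_delta0 F \<delta> + (\<Sum>j=1..i. conj_mult Pc j)"
proof -
  have "sum_list \<delta> = (\<Sum>j\<in>set [1..<i+1]. mult_conj P j)"
    unfolding mult_conj_list_def by (simp only: sum_set_upt_conv_sum_list_nat)
  also have "\<dots> = (\<Sum>j=1..i. conj_mult Pc j)"
    by (rule sum.cong) (auto simp: mult_conj_def conj_mult_def)
  finally show ?thesis
    using length_F by (simp add: sres_row_polys_eq_block_rows length_block_rows)
qed

lemma rows_fit:
  "1 \<le> length rows" "length rows \<le> width" "width - length rows = degree (excess_root_prod Pc i)"
proof -
  have "conj_mult Pc 1 \<le> (\<Sum>j=1..i. conj_mult Pc j)"
    using i_pos by (intro member_le_sum) auto
  moreover have "0 < conj_mult Pc 1"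
    using i_pos i_le_degree by (intro conj_mult_1_pos) (simp add: degree_Pc)
  ultimately show "1 \<le> length rows" unfolding length_rows by simp
  have "(\<Sum>j=1..i. conj_mult Pc j) + degree (excess_root_prod Pc i) = degree P"
    using sum_conj_mult_add_degree_excess_root_prod[OF Pc_nonzero] by (simp add: degree_Pc)
  then show "length rows \<le> width" "width - length rows = degree (excess_root_prod Pc i)"
    unfolding length_rows by simp_all
qed

lemma coeff_rows_eq_0: "r < length rows \<Longrightarrow> width \<le> k \<Longrightarrow> coeff (rows ! r) k = 0"
  using coeff_sres_row_polys_eq_0[OF length_F] nth_F[of 0] by simp

lemma row_combination:
  obtains A where "(\<Sum>r<length rows. smult (v r) (rows ! r)) = (\<Sum>j\<le>i. A j * (pderiv ^^ j) P)"
    and "\<And>j k. 1 \<le> j \<Longrightarrow> j \<le> i \<Longrightarrow> conj_mult Pc j \<le> k \<Longrightarrow> coeff (A j) k = 0"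
    and "(\<forall>j\<le>i. A j = 0) \<longrightarrow> (\<forall>r<length rows. v r = 0)"
proof -
  define ps where "ps = zip F (sres_delta0 F \<delta> # \<delta>)"
  have rows: "rows = block_rows ps" unfolding ps_def by (rule sres_row_polys_eq_block_rows)
  have len: "length ps = Suc i" using length_F length_\<delta> by (simp add: ps_def)
  have fst: "fst (ps ! j) = (pderiv ^^ j) P" if "j \<le> i" for j
    using that length_F length_\<delta> nth_F by (simp add: ps_def)
  have snd: "snd (ps ! j) = conj_mult Pc j" if "1 \<le> j" "j \<le> i" for j
    using that length_F length_\<delta> nth_\<delta>[of j] by (cases j) (auto simp: ps_def)
  obtain A where A: "(\<Sum>r<length rows. smult (v r) (rows ! r)) = (\<Sum>j<length ps. A j * fst (ps ! j))"
    "\<forall>j<length ps. \<forall>k\<ge>snd (ps ! j). coeff (A j) k = 0"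
    "(\<forall>j<length ps. A j = 0) \<longrightarrow> (\<forall>r<length rows. v r = 0)"
    unfolding rows using combination_block_rows[of v ps] by blast
  show ?thesis
  proof
    show "(\<Sum>r<length rows. smult (v r) (rows ! r)) = (\<Sum>j\<le>i. A j * (pderiv ^^ j) P)"
      unfolding A(1) len lessThan_Suc_atMost by (rule sum.cong) (simp_all add: fst)
    show "coeff (A j) k = 0" if "1 \<le> j" "j \<le> i" "conj_mult Pc j \<le> k" for j k
      using A(2) that len snd by (metis le_imp_less_Suc)
    show "(\<forall>j\<le>i. A j = 0) \<longrightarrow> (\<forall>r<length rows. v r = 0)"
      using A(3) len by (metis less_Suc_eq_le)
  qed
qed

lemma excess_root_prod_dvd_combination:
  "excess_root_prod Pc i dvd map_poly complex_of_real (\<Sum>j\<le>i. A j * (pderiv ^^ j) P)"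
  unfolding map_poly_of_real_sum map_poly_of_real_mult map_poly_of_real_higher_pderiv
  by (intro dvd_sum dvd_mult excess_root_prod_dvd_higher_pderiv Pc_nonzero) simp

text \<open>A combination of degree below \<open>degree (excess_root_prod Pc i)\<close> is a multiple of it, hence \<open>0\<close>.\<close>
lemma rows_independent:
  assumes "\<And>k. width - length rows \<le> k \<Longrightarrow> coeff (\<Sum>r<length rows. smult (v r) (rows ! r)) k = 0"
  shows "\<forall>r<length rows. v r = 0"
proof -
  obtain A where A: "(\<Sum>r<length rows. smult (v r) (rows ! r)) = (\<Sum>j\<le>i. A j * (pderiv ^^ j) P)"
    "\<And>j k. 1 \<le> j \<Longrightarrow> j \<le> i \<Longrightarrow> conj_mult Pc j \<le> k \<Longrightarrow> coeff (A j) k = 0"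
    "(\<forall>j\<le>i. A j = 0) \<longrightarrow> (\<forall>r<length rows. v r = 0)"
    by (rule row_combination[of v]) blast
  define T where "T = (\<Sum>j\<le>i. A j * (pderiv ^^ j) P)"
  have "T = 0"
  proof (rule ccontr)
    assume "T \<noteq> 0"
    then have "degree T < degree (excess_root_prod Pc i)"
      using assms[of "degree T"] rows_fit(3) A(1) by (fastforce simp: T_def)
    moreover have "degree (excess_root_prod Pc i) \<le> degree (map_poly complex_of_real T)"
      using excess_root_prod_dvd_combination[of A] \<open>T \<noteq> 0\<close>
      by (intro dvd_imp_degree_le) (simp_all add: T_def map_poly_eq_0_iff)
    ultimately show False by (simp add: degree_map_poly)
  qed
  moreover have "map_poly complex_of_real T = (\<Sum>j\<le>i. map_poly complex_of_real (A j) * (pderiv ^^ j) Pc)"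
    unfolding T_def map_poly_of_real_sum map_poly_of_real_mult map_poly_of_real_higher_pderiv ..
  ultimately have "(\<Sum>j\<le>i. map_poly complex_of_real (A j) * (pderiv ^^ j) Pc) = 0" by simp
  then have "map_poly complex_of_real (A j) = 0" if "j \<le> i" for j
    using Pc_nonzero that A(2)
    by (intro higher_pderiv_combination_eq_0[where A = "\<lambda>j. map_poly complex_of_real (A j)"])
       (auto simp: coeff_map_poly)
  then show ?thesis using A(3) by (simp add: map_poly_eq_0_iff)
qed

lemma subresultant_eq_det_poly: "subresultant F \<delta> = det_poly (coeff_mat rows width)"
  using nth_F[of 0] by (simp add: subresultant_def gen_sylvester_mat_eq_coeff_mat)

lemma subresultant_nonzero: "subresultant F \<delta> \<noteq> 0"
  and degree_subresultant: "degree (subresultant F \<delta>) = degree (excess_root_prod Pc i)"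
  using det_poly_coeff_mat_exact_degree[OF rows_fit(1,2) coeff_rows_eq_0 rows_independent]
  unfolding subresultant_eq_det_poly rows_fit(3) by auto

lemma subresultant_combination:
  obtains A where "subresultant F \<delta> = (\<Sum>j\<le>i. A j * (pderiv ^^ j) P)"
proof -
  let ?v = "\<lambda>r. cofactor (dp_minor (coeff_mat rows width) 0) r (length rows - 1)"
  obtain A where "(\<Sum>r<length rows. smult (?v r) (rows ! r)) = (\<Sum>j\<le>i. A j * (pderiv ^^ j) P)"
    by (rule row_combination[of ?v]) blast
  then show ?thesis
    using det_poly_coeff_mat_eq_combination[OF rows_fit(1,2) coeff_rows_eq_0] that
    unfolding subresultant_eq_det_poly by simp
qed

lemma subresultant_eq_smult_excess_root_prod:
  "\<exists>c. c \<noteq> 0 \<and> map_poly complex_of_real (subresultant F \<delta>) = smult c (excess_root_prod Pc i)"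
proof (rule dvd_degree_le_imp_eq_smult)
  obtain A where A: "subresultant F \<delta> = (\<Sum>j\<le>i. A j * (pderiv ^^ j) P)"
    by (rule subresultant_combination)
  show "excess_root_prod Pc i dvd map_poly complex_of_real (subresultant F \<delta>)"
    unfolding A by (rule excess_root_prod_dvd_combination)
  show "map_poly complex_of_real (subresultant F \<delta>) \<noteq> 0"
    using subresultant_nonzero by (simp add: map_poly_eq_0_iff)
  show "degree (map_poly complex_of_real (subresultant F \<delta>)) \<le> degree (excess_root_prod Pc i)"
    using degree_subresultant by (simp add: degree_map_poly)
qed

lemma subresultant_eq_smult_Gcd:
  "\<exists>c. c \<noteq> 0 \<and> subresultant F \<delta> = smult c (Gcd {(pderiv ^^ k) P | k. k \<le> i})"
proof (rule dvd_degree_le_imp_eq_smult)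
  let ?R = "subresultant F \<delta>" and ?G = "Gcd {(pderiv ^^ k) P | k. k \<le> i}"
  obtain A where A: "?R = (\<Sum>j\<le>i. A j * (pderiv ^^ j) P)"
    by (rule subresultant_combination)
  show "?G dvd ?R" unfolding A by (intro dvd_sum dvd_mult Gcd_dvd) auto
  obtain c where c: "c \<noteq> 0" "map_poly complex_of_real ?R = smult c (excess_root_prod Pc i)"
    using subresultant_eq_smult_excess_root_prod by blast
  have "?R dvd (pderiv ^^ k) P" if "k \<le> i" for k
    unfolding map_poly_of_real_dvd_iff[symmetric] c(2) map_poly_of_real_higher_pderiv
    using excess_root_prod_dvd_higher_pderiv[OF Pc_nonzero that] c(1) by (simp add: smult_dvd_iff)
  then have "?R dvd ?G" by (intro Gcd_greatest) auto
  moreover have "P \<in> {(pderiv ^^ k) P | k. k \<le> i}" by (intro CollectI exI[of _ 0]) simp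
  then have "?G \<noteq> 0" using P_nonzero by auto
  ultimately show "degree ?R \<le> degree ?G" by (rule dvd_imp_degree_le)
  show "?R \<noteq> 0" by (rule subresultant_nonzero)
qed

end

theorem mainTheorem1:
  fixes P :: "real poly" and n :: nat
  assumes "degree P = n" and "n \<ge> 2"
  shows "\<forall>i. 1 \<le> i \<and> i \<le> n \<longrightarrow>
    (let Pc = map_poly complex_of_real P;
         R = subresultant (map (\<lambda>k. (pderiv ^^ k) P) [0..<i+1])
                          (map (mult_conj P) [1..<i+1]);
         G = Gcd {(pderiv ^^ k) P | k. k \<le> i}
     in (\<exists>c::complex. c \<noteq> 0 \<and>
           map_poly complex_of_real R =
             smult c (\<Prod>r\<in>{r. poly Pc r = 0 \<and> order r Pc > i}. [:-r, 1:] ^ (order r Pc - i)))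
      \<and> (\<exists>c::real. c \<noteq> 0 \<and> R = smult c G))"
proof -
  have "derivative_subresultant P i" if "1 \<le> i \<and> i \<le> n" for i
    using that assms(1) by unfold_locales auto
  then show ?thesis
    unfolding Let_def higher_pderivs_def[symmetric] mult_conj_list_def[symmetric]
      excess_root_prod_def[symmetric]
    using derivative_subresultant.subresultant_eq_smult_excess_root_prod
      derivative_subresultant.subresultant_eq_smult_Gcd
    by blast
qed

end
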